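(* Fix $C,\mu_0,d,f_0\in\mathbb{R}$ and $a,b\in[-\infty,\infty]$ with $a<0<b$, and let $\mu:(a,b)\to\mathbb{R}$ solve the ODE $\mu'(x)-\mu(x)^2=C$, $\mu(0)=\mu_0$. Define $f,g:(a,b)\to\mathbb{R}$ by $$f(x):=d\int_0^x\exp\Big(2\int_0^y\mu(z)\,\mathrm{d}z\Big)\mathrm{d}y+f_0,\qquad g(x):=\exp\Big(-\int_0^x\mu(z)\,\mathrm{d}z\Big).$$ Then there exist $e_1,e_2,e_3\in\mathbb{R}$ such that $f'(x)=e_1f(x)^2+e_2f(x)+e_3$ on $(a,b)$ with $f(0)=f_0$, and $g$ solves $-g''(x)=Cg(x)$ on $(a,b)$ with $g(0)=1$, $g'(0)=-\mu_0$. *)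

theory Defs
  imports "HOL-Probability.Probability"
begin

end

theory Submission
  imports Defs
begin

text \<open>With \<open>M\<close> a primitive of \<open>\<mu>\<close>, the Riccati equation \<open>\<mu>' = C + \<mu>\<^sup>2\<close> makes
  \<open>(C + \<mu>\<^sup>2) exp (-2M)\<close> constant, i.e. \<open>C + \<mu>\<^sup>2 = K exp (2M)\<close>.  If \<open>f' = d exp (2M)\<close> with
  \<open>d \<noteq> 0\<close>, then \<open>(\<mu> - (K/d) f)' = 0\<close>, so \<open>\<mu>\<close> is an affine function of \<open>f\<close>; differentiating
  \<open>f' = d exp (2M)\<close> once more then shows that \<open>f'\<close> is a quadratic polynomial in \<open>f\<close>.
  For \<open>g = exp (-M)\<close> one has \<open>g' = -\<mu> g\<close> and \<open>g'' = -(C + \<mu>\<^sup>2) g + \<mu>\<^sup>2 g = -C g\<close>.\<close>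

lemma convex_einterval [simp]: "convex (einterval a b)"
  unfolding is_interval_convex_1[symmetric] is_interval_1
proof (intro ballI allI impI)
  fix u v x assume "u \<in> einterval a b" "v \<in> einterval a b" "u \<le> x \<and> x \<le> v"
  then have "a < ereal u" "ereal v < b" "ereal u \<le> ereal x" "ereal x \<le> ereal v"
    by (simp_all add: einterval_iff)
  then show "x \<in> einterval a b"
    unfolding einterval_iff by (meson le_less_trans less_le_trans)
qed

lemma DERIV_zero_convex_eq:
  fixes h :: "real \<Rightarrow> real"
  assumes "convex S" "\<And>y. y \<in> S \<Longrightarrow> (h has_real_derivative 0) (at y)" "x \<in> S" "c \<in> S"
  shows "h x = h c"
proof -
  have "\<exists>k. \<forall>y\<in>S. h y = k"
    using assms(2) by (intro has_field_derivative_zero_constant[OF assms(1)]) (rule has_field_derivative_at_within)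
  then show ?thesis
    using assms(3,4) by auto
qed

lemma interval_integral_has_vector_derivative_open:
  fixes f :: "real \<Rightarrow> 'a::euclidean_space"
  assumes "open S" "convex S" "c \<in> S" "x \<in> S" and contf: "continuous_on S f"
  shows "((\<lambda>u. LBINT y=c..u. f y) has_vector_derivative f x) (at x)"
proof -
  have "min c x \<in> S" "max c x \<in> S"
    using assms(3,4) by (simp_all add: min_def max_def)
  obtain \<epsilon>1 where "\<epsilon>1 > 0" "ball (min c x) \<epsilon>1 \<subseteq> S"
    using \<open>open S\<close> \<open>min c x \<in> S\<close> by (rule openE)
  obtain \<epsilon>2 where "\<epsilon>2 > 0" "ball (max c x) \<epsilon>2 \<subseteq> S"
    using \<open>open S\<close> \<open>max c x \<in> S\<close> by (rule openE)
  define d where "d = min c x - \<epsilon>1 / 2"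
  define e where "e = max c x + \<epsilon>2 / 2"
  have "d \<in> ball (min c x) \<epsilon>1" "e \<in> ball (max c x) \<epsilon>2"
    using \<open>\<epsilon>1 > 0\<close> \<open>\<epsilon>2 > 0\<close> by (simp_all add: d_def e_def dist_real_def)
  then have "d \<in> S" "e \<in> S"
    using \<open>ball (min c x) \<epsilon>1 \<subseteq> S\<close> \<open>ball (max c x) \<epsilon>2 \<subseteq> S\<close> by blast+
  have "d < c" "d < x" "c < e" "x < e"
    using \<open>\<epsilon>1 > 0\<close> \<open>\<epsilon>2 > 0\<close> by (auto simp: d_def e_def)
  have de: "{d..e} \<subseteq> S"
    using closed_segment_subset[OF \<open>d \<in> S\<close> \<open>e \<in> S\<close> \<open>convex S\<close>] \<open>d < c\<close> \<open>c < e\<close>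
    by (simp add: closed_segment_eq_real_ivl1)
  have "((\<lambda>u. LBINT y=c..u. f y) has_vector_derivative f x) (at x within {d..e})"
    using \<open>d < c\<close> \<open>d < x\<close> \<open>c < e\<close> \<open>x < e\<close>
    by (intro interval_integral_FTC2 continuous_on_subset[OF contf de]) auto
  then have "((\<lambda>u. LBINT y=c..u. f y) has_vector_derivative f x) (at x within {d<..<e})"
    by (rule has_vector_derivative_within_subset) auto
  moreover have "x \<in> {d<..<e}"
    using \<open>d < x\<close> \<open>x < e\<close> by simp
  ultimately show ?thesis
    using has_vector_derivative_within_open[OF _ open_greaterThanLessThan] by blast
qed

locale riccati =
  fixes S :: "real set" and C :: real and \<mu> M :: "real \<Rightarrow> real"
  assumes open_S: "open S" and convex_S: "convex S"
    and \<mu>_deriv: "\<And>x. x \<in> S \<Longrightarrow> (\<mu> has_real_derivative C + (\<mu> x)\<^sup>2) (at x)"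
    and M_deriv: "\<And>x. x \<in> S \<Longrightarrow> (M has_real_derivative \<mu> x) (at x)"
begin

lemma integrating_factor_eq:
  assumes "x \<in> S" "c \<in> S"
  shows "(C + (\<mu> x)\<^sup>2) * exp (-2 * M x) = (C + (\<mu> c)\<^sup>2) * exp (-2 * M c)"
proof (rule DERIV_zero_convex_eq[OF convex_S _ assms])
  fix y assume "y \<in> S"
  show "((\<lambda>u. (C + (\<mu> u)\<^sup>2) * exp (-2 * M u)) has_real_derivative 0) (at y)"
    by (auto intro!: derivative_eq_intros M_deriv \<mu>_deriv \<open>y \<in> S\<close>
             simp: algebra_simps power2_eq_square)
qed

lemma riccati_of_deriv_exp_primitive:
  assumes "c \<in> S" and f_deriv: "\<And>x. x \<in> S \<Longrightarrow> (f has_real_derivative d * exp (2 * M x)) (at x)"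
  shows "\<exists>e1 e2 e3. \<forall>x\<in>S. (f has_real_derivative e1 * (f x)\<^sup>2 + e2 * f x + e3) (at x)"
proof (cases "d = 0")
  case True
  then show ?thesis
    using f_deriv by (intro exI[of _ 0]) simp
next
  case False
  define K where "K = (C + (\<mu> c)\<^sup>2) * exp (-2 * M c)"
  have square_eq: "C + (\<mu> x)\<^sup>2 = K * exp (2 * M x)" if "x \<in> S" for x
  proof -
    have "K * exp (2 * M x) = (C + (\<mu> x)\<^sup>2) * (exp (-2 * M x) * exp (2 * M x))"
      using integrating_factor_eq[OF that \<open>c \<in> S\<close>] by (simp add: K_def)
    then show ?thesis by (simp flip: exp_add)
  qed
  define e1 where "e1 = K / d"
  define k where "k = \<mu> c - e1 * f c"
  have \<mu>_affine: "\<mu> x = e1 * f x + k" if "x \<in> S" for x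
  proof -
    have "\<mu> x - e1 * f x = \<mu> c - e1 * f c"
    proof (rule DERIV_zero_convex_eq[OF convex_S _ that \<open>c \<in> S\<close>])
      fix y assume y: "y \<in> S"
      have "((\<lambda>u. \<mu> u - e1 * f u) has_real_derivative C + (\<mu> y)\<^sup>2 - e1 * (d * exp (2 * M y))) (at y)"
        by (intro DERIV_diff DERIV_cmult \<mu>_deriv f_deriv y)
      then show "((\<lambda>u. \<mu> u - e1 * f u) has_real_derivative 0) (at y)"
        using square_eq[OF y] False by (simp add: e1_def)
    qed
    then show ?thesis by (simp add: k_def)
  qed
  define e3 where "e3 = d * exp (2 * M c) - e1 * (f c)\<^sup>2 - 2 * k * f c"
  have "d * exp (2 * M x) = e1 * (f x)\<^sup>2 + 2 * k * f x + e3" if "x \<in> S" for x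
  proof -
    have "d * exp (2 * M x) - e1 * (f x)\<^sup>2 - 2 * k * f x
        = d * exp (2 * M c) - e1 * (f c)\<^sup>2 - 2 * k * f c"
    proof (rule DERIV_zero_convex_eq[OF convex_S _ that \<open>c \<in> S\<close>])
      fix y assume y: "y \<in> S"
      show "((\<lambda>u. d * exp (2 * M u) - e1 * (f u)\<^sup>2 - 2 * k * f u) has_real_derivative 0) (at y)"
        by (auto intro!: derivative_eq_intros M_deriv f_deriv y
                 simp: \<mu>_affine[OF y] algebra_simps power2_eq_square)
    qed
    then show ?thesis by (simp add: e3_def)
  qed
  then show ?thesis
    using f_deriv by (intro exI[of _ e1] exI[of _ "2 * k"] exI[of _ e3]) auto
qed

lemma integral_exp_primitive_has_real_derivative:
  assumes "c \<in> S" "x \<in> S"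
  shows "((\<lambda>u. LBINT y=c..u. exp (2 * M y)) has_real_derivative exp (2 * M x)) (at x)"
proof -
  have "continuous_on S (\<lambda>y. exp (2 * M y))"
    using M_deriv by (intro continuous_at_imp_continuous_on ballI continuous_intros DERIV_isCont) auto
  then show ?thesis
    using interval_integral_has_vector_derivative_open[OF open_S convex_S assms]
    by (simp add: has_real_derivative_iff_has_vector_derivative)
qed

lemma exp_neg_primitive_has_real_derivative:
  assumes "x \<in> S"
  shows "((\<lambda>u. exp (- M u)) has_real_derivative - \<mu> x * exp (- M x)) (at x)"
  by (auto intro!: derivative_eq_intros M_deriv assms)

lemma exp_neg_primitive_second_deriv:
  assumes "x \<in> S"
  shows "(deriv (\<lambda>u. exp (- M u)) has_real_derivative - (C * exp (- M x))) (at x)"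
proof -
  have "((\<lambda>u. - \<mu> u * exp (- M u)) has_real_derivative - (C * exp (- M x))) (at x)"
    by (auto intro!: derivative_eq_intros \<mu>_deriv M_deriv assms
             simp: algebra_simps power2_eq_square)
  then show ?thesis
    by (rule has_field_derivative_transform_within_open[OF _ open_S assms])
       (simp add: DERIV_imp_deriv[OF exp_neg_primitive_has_real_derivative])
qed

end

lemma riccati_einterval:
  assumes "c \<in> einterval a b"
    and \<mu>_deriv: "\<And>x. x \<in> einterval a b \<Longrightarrow> (\<mu> has_real_derivative C + (\<mu> x)\<^sup>2) (at x)"
  shows "riccati (einterval a b) C \<mu> (\<lambda>u. LBINT z=c..u. \<mu> z)"
proof
  fix x assume "x \<in> einterval a b"
  have "continuous_on (einterval a b) \<mu>"
    using \<mu>_deriv by (meson DERIV_isCont continuous_at_imp_continuous_on)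
  with \<open>x \<in> einterval a b\<close> show "((\<lambda>u. LBINT z=c..u. \<mu> z) has_real_derivative \<mu> x) (at x)"
    using interval_integral_has_vector_derivative_open[OF _ _ assms(1)]
    by (simp add: has_real_derivative_iff_has_vector_derivative)
qed (use \<mu>_deriv in auto)

theorem lemma2p1:
  fixes C \<mu>0 d f0 :: real and a b :: ereal
    and \<mu> f g :: "real \<Rightarrow> real"
  assumes ab: "a < 0" "0 < b"
    and ode: "\<forall>x. a < ereal x \<and> ereal x < b \<longrightarrow>
                 (\<mu> has_real_derivative (C + (\<mu> x)\<^sup>2)) (at x)"
    and init: "\<mu> 0 = \<mu>0"
    and f_def: "\<forall>x. f x = d * (LBINT y=0..x. exp (2 * (LBINT z=0..y. \<mu> z))) + f0"
    and g_def: "\<forall>x. g x = exp (- (LBINT z=0..x. \<mu> z))"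
  shows "(\<exists>e1 e2 e3 :: real. (\<forall>x. a < ereal x \<and> ereal x < b \<longrightarrow>
              (f has_real_derivative (e1 * (f x)\<^sup>2 + e2 * f x + e3)) (at x)) \<and> f 0 = f0)
         \<and> (\<forall>x. a < ereal x \<and> ereal x < b \<longrightarrow>
              g differentiable (at x) \<and> (deriv g has_real_derivative (- (C * g x))) (at x))
         \<and> g 0 = 1 \<and> deriv g 0 = - \<mu>0"
proof -
  define S where "S = einterval a b"
  define M where "M = (\<lambda>u::real. LBINT z=ereal 0..u. \<mu> z)"
  have in_S: "x \<in> S \<longleftrightarrow> a < ereal x \<and> ereal x < b" for x
    by (simp add: S_def einterval_iff)
  have "0 \<in> S" using ab by (simp add: in_S flip: zero_ereal_def)
  interpret riccati S C \<mu> M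
    unfolding S_def M_def by (rule riccati_einterval) (use \<open>0 \<in> S\<close> ode in \<open>auto simp: S_def einterval_iff\<close>)
  have f_eq: "f = (\<lambda>x. d * (LBINT y=ereal 0..x. exp (2 * M y)) + f0)"
    and g_eq: "g = (\<lambda>x. exp (- M x))"
    using f_def g_def by (auto simp: M_def zero_ereal_def)
  have "M 0 = 0" by (simp add: M_def)
  have "x \<in> S \<Longrightarrow> (f has_real_derivative d * exp (2 * M x)) (at x)" for x
    unfolding f_eq by (auto intro!: derivative_eq_intros integral_exp_primitive_has_real_derivative \<open>0 \<in> S\<close>)
  then obtain e1 e2 e3 where "\<forall>x\<in>S. (f has_real_derivative e1 * (f x)\<^sup>2 + e2 * f x + e3) (at x)"
    using riccati_of_deriv_exp_primitive[OF \<open>0 \<in> S\<close>] by blast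
  moreover have "f 0 = f0" by (simp add: f_eq)
  moreover have "deriv g 0 = - \<mu>0"
    using DERIV_imp_deriv[OF exp_neg_primitive_has_real_derivative[OF \<open>0 \<in> S\<close>]]
    by (simp add: g_eq \<open>M 0 = 0\<close> init)
  moreover have "g differentiable (at x)" if "x \<in> S" for x
    using exp_neg_primitive_has_real_derivative[OF that] by (auto simp: g_eq real_differentiable_def)
  ultimately show ?thesis
    unfolding in_S[symmetric] using exp_neg_primitive_second_deriv
    by (auto simp: g_eq \<open>M 0 = 0\<close>)
qed

end
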